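(* In the allocation problem and Synchronized Greedy (SG) mechanism described in the context, suppose all $r_i$ are equal. Let $a^\pi$ be the SG allocation under truthful bids. Then for all agents $i,i'$ and all $k=1,\ldots,m$, \[\sum_{\ell=1}^k a^\pi_{i\pi_i(\ell)}\ \ge\ \sum_{\ell=1}^k a^\pi_{i'\pi_i(\ell)},\] i.e., every agent weakly majorization-prefers its own share to that of any other agent.
   Context: There are $m$ distinct divisible goods; good $j$ is available in amount $q_j>0$. There are $n$ agents; agent $i$ is to receive a total of $r_i>0$, with $\sum_j q_j=\sum_i r_i$. An allocation is a family $a_{ij}\ge 0$ with $\sum_j a_{ij}=r_i$ and $\sum_i a_{ij}=q_j$. Each agent $i$ has a true preference list $\pi_i$, a permutation of the goods ($\pi_i(1)$ most preferred); $\pi=(\pi_1,\ldots,\pi_n)$. The SG mechanism: each agent $i$ bids a permutation $\sigma_i$ of the goods; over time $t\in[0,1]$ each agent $i$ receives, at rate $r_i$, the good highest in $\sigma_i$ among those not yet exhausted (a good is exhausted when the total amount handed out equals $q_j$; several agents may receive a good simultaneously; upon exhaustion, agents receiving it switch instantly to their next non-exhausted good). $a^\pi_{ij}$ is the total amount of good $j$ agent $i$ receives when every agent $i$ bids $\pi_i$. *)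

theory Defs
  imports Main "HOL.Real"
begin

text \<open>Goods are 0..<m, agents are 0..<n. A bid/preference of agent i is a function
  sigma i :: nat => nat, with sigma i 0 the most preferred good (0-indexed),
  assumed to be a bijection of {..<m}.  A state of the SG process is a pair
  (rem, al): remaining amount of each good, and amount handed out so far.\<close>

definition sg_eat :: "nat \<Rightarrow> (nat \<Rightarrow> nat \<Rightarrow> nat) \<Rightarrow> (nat \<Rightarrow> real) \<Rightarrow> nat \<Rightarrow> nat" where
  "sg_eat m \<sigma> rem i = \<sigma> i (LEAST l. l < m \<and> rem (\<sigma> i l) > 0)"

definition sg_rate :: "nat \<Rightarrow> nat \<Rightarrow> (nat \<Rightarrow> real) \<Rightarrow> (nat \<Rightarrow> nat \<Rightarrow> nat)
    \<Rightarrow> (nat \<Rightarrow> real) \<Rightarrow> nat \<Rightarrow> real" where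
  "sg_rate n m r \<sigma> rem j = (\<Sum>i\<in>{i. i < n \<and> sg_eat m \<sigma> rem i = j}. r i)"

text \<open>One phase of SG: all agents eat their top non-exhausted good at rate r i until
  the first of the currently eaten goods gets exhausted (after duration d).\<close>

definition sg_step :: "nat \<Rightarrow> nat \<Rightarrow> (nat \<Rightarrow> real) \<Rightarrow> (nat \<Rightarrow> nat \<Rightarrow> nat)
    \<Rightarrow> (nat \<Rightarrow> real) \<times> (nat \<Rightarrow> nat \<Rightarrow> real) \<Rightarrow> (nat \<Rightarrow> real) \<times> (nat \<Rightarrow> nat \<Rightarrow> real)" where
  "sg_step n m r \<sigma> st =
     (let rem = fst st; al = snd st in
      if \<exists>j<m. rem j > 0 then
        (let e = sg_eat m \<sigma> rem;
             rate = sg_rate n m r \<sigma> rem;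
             d = Min {rem j / rate j | j. j < m \<and> rate j > 0}
         in (\<lambda>j. rem j - rate j * d,
             \<lambda>i j. al i j + (if i < n \<and> e i = j then r i * d else 0)))
      else st)"

text \<open>Each phase exhausts at least one good, so after m phases all goods are exhausted
  (further phases would not change anything).  sg_alloc gives a_{ij}.\<close>

definition sg_alloc :: "nat \<Rightarrow> nat \<Rightarrow> (nat \<Rightarrow> real) \<Rightarrow> (nat \<Rightarrow> real) \<Rightarrow> (nat \<Rightarrow> nat \<Rightarrow> nat)
    \<Rightarrow> nat \<Rightarrow> nat \<Rightarrow> real" where
  "sg_alloc n m q r \<sigma> = snd ((sg_step n m r \<sigma> ^^ m) (q, \<lambda>i j. 0))"

end

theory Submission
  imports Defs
begin

text \<open>Under truthful bids, in every phase of SG each agent eats its top remaining good, and all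
  agents eat at the same rate.  If agent i' eats a good among i's k favourites, that good still
  has positive remainder, so i's top remaining good is among them too.  Hence in each phase the amount of i's top-k goods going to i is at least
  the amount going to i', and summing over the phases gives the claim.\<close>

definition sg_phase_length ::
    "nat \<Rightarrow> nat \<Rightarrow> (nat \<Rightarrow> real) \<Rightarrow> (nat \<Rightarrow> nat \<Rightarrow> nat) \<Rightarrow> (nat \<Rightarrow> real) \<Rightarrow> real" where
  "sg_phase_length n m r \<sigma> rem =
     Min {rem j / sg_rate n m r \<sigma> rem j | j. j < m \<and> sg_rate n m r \<sigma> rem j > 0}"

lemma sg_step_active:
  assumes "\<exists>j<m. rem j > 0"
  shows "sg_step n m r \<sigma> (rem, al) =
    (\<lambda>j. rem j - sg_rate n m r \<sigma> rem j * sg_phase_length n m r \<sigma> rem,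
     \<lambda>x j. al x j + (if x < n \<and> sg_eat m \<sigma> rem x = j then r x * sg_phase_length n m r \<sigma> rem else 0))"
  using assms unfolding sg_step_def sg_phase_length_def Let_def fst_conv snd_conv
  by (simp only: if_True)

lemma sg_step_idle:
  assumes "\<not> (\<exists>j<m. rem j > 0)"
  shows "sg_step n m r \<sigma> (rem, al) = (rem, al)"
  using assms unfolding sg_step_def Let_def fst_conv snd_conv by (simp only: if_False)

lemma sg_rate_nonneg:
  assumes "\<And>x. x < n \<Longrightarrow> 0 \<le> r x"
  shows "0 \<le> sg_rate n m r \<sigma> rem j"
  unfolding sg_rate_def using assms by (intro sum_nonneg) auto

lemma sg_rate_eaten_ge:
  assumes "\<And>x. x < n \<Longrightarrow> 0 \<le> r x" and "x < n"
  shows "r x \<le> sg_rate n m r \<sigma> rem (sg_eat m \<sigma> rem x)"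
  unfolding sg_rate_def using assms by (intro member_le_sum) auto

lemma sg_phase_length_bound:
  assumes "j < m" and "sg_rate n m r \<sigma> rem j > 0"
  shows "sg_rate n m r \<sigma> rem j * sg_phase_length n m r \<sigma> rem \<le> rem j"
proof -
  have "sg_phase_length n m r \<sigma> rem \<le> rem j / sg_rate n m r \<sigma> rem j"
    unfolding sg_phase_length_def using assms by (intro Min_le) auto
  then show ?thesis using assms(2) by (simp add: field_simps)
qed

lemma sg_phase_length_nonneg:
  assumes "\<And>j. j < m \<Longrightarrow> 0 \<le> rem j" and "\<And>x. x < n \<Longrightarrow> 0 \<le> r x"
    and "j < m" and "sg_rate n m r \<sigma> rem j > 0"
  shows "0 \<le> sg_phase_length n m r \<sigma> rem"
  unfolding sg_phase_length_def
  using assms sg_rate_nonneg[of n r m \<sigma> rem] by (subst Min_ge_iff) auto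

lemma sg_step_rem_nonneg:
  assumes "\<And>x. x < n \<Longrightarrow> 0 \<le> r x" and "\<And>j. j < m \<Longrightarrow> 0 \<le> rem j" and "j < m"
  shows "0 \<le> fst (sg_step n m r \<sigma> (rem, al)) j"
proof (cases "\<exists>j<m. rem j > 0")
  case True
  have "sg_rate n m r \<sigma> rem j * sg_phase_length n m r \<sigma> rem \<le> rem j"
  proof (cases "sg_rate n m r \<sigma> rem j > 0")
    case False
    then have "sg_rate n m r \<sigma> rem j = 0"
      using sg_rate_nonneg[of n r m \<sigma> rem j, OF assms(1)] by linarith
    then show ?thesis using assms(2,3) by simp
  qed (use assms(3) sg_phase_length_bound in auto)
  then show ?thesis using True by (simp add: sg_step_active)
qed (use assms sg_step_idle in auto)

lemma sg_eat_first_positive: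
  assumes "bij_betw (\<sigma> x) {..<m} {..<m}" and "j < m" and "rem j > 0"
  shows "sg_eat m \<sigma> rem x < m" and "rem (sg_eat m \<sigma> rem x) > 0"
proof -
  obtain l where "l < m" "\<sigma> x l = j"
    using assms(1,2) by (metis bij_betw_imp_surj_on imageE lessThan_iff)
  then have "\<exists>l. l < m \<and> rem (\<sigma> x l) > 0" using assms(3) by blast
  then have least: "(LEAST l. l < m \<and> rem (\<sigma> x l) > 0) < m"
      "rem (\<sigma> x (LEAST l. l < m \<and> rem (\<sigma> x l) > 0)) > 0"
    by (metis (mono_tags, lifting) LeastI_ex)+
  show "sg_eat m \<sigma> rem x < m"
    using least(1) bij_betwE[OF assms(1)] unfolding sg_eat_def by simp
  show "rem (sg_eat m \<sigma> rem x) > 0"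
    using least(2) unfolding sg_eat_def .
qed

lemma sg_eat_mem_prefix:
  assumes "rem (\<sigma> x l) > 0" and "l < k" and "k \<le> m"
  shows "sg_eat m \<sigma> rem x \<in> \<sigma> x ` {..<k}"
proof -
  have "(LEAST l. l < m \<and> rem (\<sigma> x l) > 0) \<le> l"
    using assms by (intro Least_le) simp
  then show ?thesis unfolding sg_eat_def using assms(2) by auto
qed

lemma sum_if_eq_image:
  assumes "inj_on f A" and "finite A"
  shows "(\<Sum>a\<in>A. if x = f a then c else 0) = (if x \<in> f ` A then c else (0::'b::comm_monoid_add))"
  using sum.reindex[OF assms(1), of "\<lambda>y. if x = y then c else 0"] assms(2)
  by (simp add: sum.delta')

lemma sg_step_prefix_share:
  fixes \<rho> :: "nat \<Rightarrow> nat"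
  assumes "\<exists>j<m. rem j > 0" and "inj_on \<rho> {..<k}"
  shows "(\<Sum>l<k. snd (sg_step n m r \<sigma> (rem, al)) x (\<rho> l)) =
    (\<Sum>l<k. al x (\<rho> l)) +
    (if x < n \<and> sg_eat m \<sigma> rem x \<in> \<rho> ` {..<k} then r x * sg_phase_length n m r \<sigma> rem else 0)"
proof -
  have "(\<Sum>l<k. if sg_eat m \<sigma> rem x = \<rho> l then c else 0) =
      (if sg_eat m \<sigma> rem x \<in> \<rho> ` {..<k} then c else (0::real))" for c
    by (rule sum_if_eq_image[OF assms(2)]) simp
  then show ?thesis by (cases "x < n") (simp_all add: sg_step_active[OF assms(1)] sum.distrib)
qed

lemma sg_step_preserves_prefix_dominance:
  assumes r_nonneg: "\<And>x. x < n \<Longrightarrow> 0 \<le> r x"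
    and perm: "\<And>x. x < n \<Longrightarrow> bij_betw (\<sigma> x) {..<m} {..<m}"
    and i: "i < n" and i': "i' < n" and r_le: "r i' \<le> r i" and r_pos: "r i > 0"
    and k: "k \<le> m"
    and rem_nonneg: "\<And>j. j < m \<Longrightarrow> 0 \<le> rem j"
    and dominance: "(\<Sum>l<k. al i' (\<sigma> i l)) \<le> (\<Sum>l<k. al i (\<sigma> i l))"
  shows "(\<Sum>l<k. snd (sg_step n m r \<sigma> (rem, al)) i' (\<sigma> i l))
       \<le> (\<Sum>l<k. snd (sg_step n m r \<sigma> (rem, al)) i (\<sigma> i l))"
proof (cases "\<exists>j<m. rem j > 0")
  case active: True
  then obtain j where j: "j < m" "rem j > 0" by blast
  define e where "e = sg_eat m \<sigma> rem"
  define d where "d = sg_phase_length n m r \<sigma> rem"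
  have "e i < m" and "0 < rem (e i')"
    using sg_eat_first_positive[where \<sigma>=\<sigma> and x=i and rem=rem, OF perm[OF i] j]
      sg_eat_first_positive[where \<sigma>=\<sigma> and x=i' and rem=rem, OF perm[OF i'] j]
    unfolding e_def by auto
  moreover have "0 < sg_rate n m r \<sigma> rem (e i)"
    using sg_rate_eaten_ge[where r=r and x=i and m=m and \<sigma>=\<sigma> and rem=rem, OF r_nonneg i] r_pos
    unfolding e_def by linarith
  ultimately have "0 \<le> d"
    unfolding d_def by (intro sg_phase_length_nonneg[OF rem_nonneg r_nonneg]) auto
  have i_eats_prefix: "e i \<in> \<sigma> i ` {..<k}" if i'_eats_prefix: "e i' \<in> \<sigma> i ` {..<k}"
  proof -
    obtain l where "l < k" "e i' = \<sigma> i l" using i'_eats_prefix by blast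
    then show ?thesis
      using \<open>0 < rem (e i')\<close> sg_eat_mem_prefix[OF _ _ k] unfolding e_def by simp
  qed
  have "(\<Sum>l<k. al i' (\<sigma> i l)) + (if e i' \<in> \<sigma> i ` {..<k} then r i' * d else 0)
      \<le> (\<Sum>l<k. al i (\<sigma> i l)) + (if e i \<in> \<sigma> i ` {..<k} then r i * d else 0)"
    using dominance i_eats_prefix mult_right_mono[OF r_le \<open>0 \<le> d\<close>]
      mult_nonneg_nonneg[OF r_nonneg[OF i] \<open>0 \<le> d\<close>]
    by auto
  moreover have "(\<Sum>l<k. snd (sg_step n m r \<sigma> (rem, al)) x (\<sigma> i l)) =
      (\<Sum>l<k. al x (\<sigma> i l)) + (if e x \<in> \<sigma> i ` {..<k} then r x * d else 0)" if "x < n" for x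
  proof -
    have "inj_on (\<sigma> i) {..<k}"
      using bij_betw_imp_inj_on[OF perm[OF i]] k by (auto intro: inj_on_subset)
    then show ?thesis using sg_step_prefix_share[OF active] that unfolding e_def d_def by simp
  qed
  ultimately show ?thesis using i i' by simp
qed (use dominance sg_step_idle in auto)

theorem theorem4:
  fixes n m :: nat and q r :: "nat \<Rightarrow> real" and \<pi> :: "nat \<Rightarrow> nat \<Rightarrow> nat"
  assumes q_pos: "\<And>j. j < m \<Longrightarrow> q j > 0"
    and r_pos: "\<And>i. i < n \<Longrightarrow> r i > 0"
    and balance: "(\<Sum>j<m. q j) = (\<Sum>i<n. r i)"
    and r_equal: "\<And>i i'. i < n \<Longrightarrow> i' < n \<Longrightarrow> r i = r i'"
    and perm: "\<And>i. i < n \<Longrightarrow> bij_betw (\<pi> i) {..<m} {..<m}"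
    and i: "i < n" and i': "i' < n"
    and k: "1 \<le> k" "k \<le> m"
  shows "(\<Sum>l<k. sg_alloc n m q r \<pi> i (\<pi> i l)) \<ge> (\<Sum>l<k. sg_alloc n m q r \<pi> i' (\<pi> i l))"
proof -
  have r_nonneg: "\<And>x. x < n \<Longrightarrow> 0 \<le> r x" using r_pos less_imp_le by blast
  have "(\<forall>j<m. 0 \<le> fst ((sg_step n m r \<pi> ^^ t) (q, \<lambda>i j. 0)) j) \<and>
    (\<Sum>l<k. snd ((sg_step n m r \<pi> ^^ t) (q, \<lambda>i j. 0)) i' (\<pi> i l))
      \<le> (\<Sum>l<k. snd ((sg_step n m r \<pi> ^^ t) (q, \<lambda>i j. 0)) i (\<pi> i l))" for t
  proof (induction t)
    case 0
    then show ?case using q_pos less_imp_le by auto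
  next
    case (Suc t)
    obtain rem al where st: "(sg_step n m r \<pi> ^^ t) (q, \<lambda>i j. 0) = (rem, al)"
      by fastforce
    show ?case
      using Suc sg_step_rem_nonneg[where r=r and m=m and rem=rem, OF r_nonneg]
        sg_step_preserves_prefix_dominance[where n=n and m=m and r=r and \<sigma>=\<pi> and i=i
          and i'=i' and k=k and rem=rem and al=al,
          OF r_nonneg perm i i' _ r_pos[OF i] k(2)]
        r_equal[OF i i']
      by (simp add: st)
  qed
  then show ?thesis unfolding sg_alloc_def by blast
qed

end
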